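(* Let $\epsilon>0$ with $1/\epsilon$ an integer, let $\mathcal{E}>0$, and let $X_1,\dots,X_n$ be independent random variables all supported on $\mathcal{V}=\{0,\epsilon\mathcal{E},2\epsilon\mathcal{E},\dots,\mathcal{E}/\epsilon\}$. Let $k$ be an integer, let $S^*\subseteq[n]$ be a set with $|S^*|\le k$ maximizing $\mathbb{E}[\mathcal{M}(S^* )]$, and assume $\mathcal{E}\in[(1-\frac1e)\mathbb{E}[\mathcal{M}(S^* )],\mathbb{E}[\mathcal{M}(S^* )]]$. Let $v_{\mathrm{heavy}}\in\mathcal{V}$ be the maximal $v\in\mathcal{V}$ with $\Pr[\mathcal{M}(S^* )\le v]<1-\epsilon^2$ ($v_{\mathrm{heavy}}=\infty$ if none exists), let $\mathcal{V}_{\mathrm{critical}}=\mathcal{V}\cap[0,v_{\mathrm{heavy}}]$, and suppose numbers $\tilde p_{\le v}$, $v\in\mathcal{V}_{\mathrm{critical}}$, satisfy $\Pr[\mathcal{M}(S^* )\le v]\le\tilde p_{\le v}<\Pr[\mathcal{M}(S^* )\le v]+2\epsilon^2$. If $\tilde S\subseteq[n]$ satisfies $\Pr[\mathcal{M}(\tilde S)\le v]\le(1+\epsilon^2)\tilde p_{\le v}+\epsilon^2$ for every $v\in\mathcal{V}_{\mathrm{critical}}$, then $\mathbb{E}[\mathcal{M}(\tilde S)]\ge(1-23\epsilon)\cdot\mathbb{E}[\mathcal{M}(S^* )]$.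
   Context: For $S\subseteq[n]$, $\mathcal{M}(S)=\max_{i\in S}X_i$. A set $\tilde S$ satisfying the displayed inequality for all $v\in\mathcal{V}_{\mathrm{critical}}$ is called CDF-equivalent. *)

theory Defs
  imports "HOL-Probability.Probability"
begin

definition grid :: "real \<Rightarrow> real \<Rightarrow> real set" where
  "grid eps E = {real j * eps * E | j::nat. real j * eps * E \<le> E / eps}"

text \<open>M(S)(omega) = max_{i in S} X_i(omega); convention 0 for S empty
  (all variables are nonnegative).\<close>
definition maxS :: "(nat \<Rightarrow> 'a \<Rightarrow> real) \<Rightarrow> nat set \<Rightarrow> 'a \<Rightarrow> real" where
  "maxS X S \<omega> = (if S = {} then 0 else Max ((\<lambda>i. X i \<omega>) ` S))"

definition cdfS :: "'a measure \<Rightarrow> (nat \<Rightarrow> 'a \<Rightarrow> real) \<Rightarrow> nat set \<Rightarrow> real \<Rightarrow> real" where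
  "cdfS M X S v = measure M {\<omega> \<in> space M. maxS X S \<omega> \<le> v}"

text \<open>V_critical = V \<inter> [0, v_heavy], where v_heavy is the maximal v in V with
  Pr[M(S*) <= v] < 1 - eps^2, and v_heavy = infinity (so V_critical = V) if none exists.\<close>
definition Vcrit :: "real \<Rightarrow> real \<Rightarrow> (real \<Rightarrow> real) \<Rightarrow> real set" where
  "Vcrit eps E F =
     (let H = {v \<in> grid eps E. F v < 1 - eps^2} in
      if H = {} then grid eps E else {v \<in> grid eps E. 0 \<le> v \<and> v \<le> Max H})"

end

theory Submission
  imports Defs
begin

text \<open>For a nonnegative variable on the lattice d*{0,...,N} the layer-cake formula reads
  E[Y] = d * sum_{j<N} Pr[Y > j d].  Both M(S~) and M(S*) live on the grid V, whose N = 1/eps^2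
  steps have width d = eps E, so it suffices to compare their cdfs pointwise on V.  On
  V_critical the hypotheses give Pr[M(S~) <= v] <= Pr[M(S*) <= v] + 6 eps^2; above v_heavy
  the same bound holds because Pr[M(S*) <= v] >= 1 - eps^2 there.  Summing the N losses
  costs at most 6 eps^2 N d = 6 eps E <= 6 eps E[M(S*)].\<close>

lemma grid_eq_lattice:
  assumes "eps > 0" "\<exists>m::nat. 1 / eps = real m" "E > 0"
  obtains N :: nat where "grid eps E = (\<lambda>j. real j * (eps * E)) ` {..N}"
    and "real N * eps^2 = 1" and "eps^2 \<le> 1"
proof -
  obtain m :: nat where m: "1 / eps = real m"
    using assms(2) by blast
  have "m > 0"
    using m \<open>eps > 0\<close> by (cases "m = 0") auto
  then have eps_m: "eps = 1 / real m"
    using m \<open>eps > 0\<close> by (simp add: field_simps)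
  have "real j * eps * E \<le> E / eps \<longleftrightarrow> j \<le> m^2" for j
  proof -
    have "real j * eps * E \<le> E / eps \<longleftrightarrow> real j * E \<le> (real m * real m) * E"
      using eps_m \<open>m > 0\<close> by (simp add: pos_divide_le_eq ac_simps)
    also have "\<dots> \<longleftrightarrow> j \<le> m^2"
      using \<open>E > 0\<close> by (simp add: power2_eq_square flip: of_nat_mult)
    finally show ?thesis .
  qed
  then have "grid eps E = (\<lambda>j. real j * (eps * E)) ` {..m^2}"
    unfolding grid_def by (auto simp: mult.assoc)
  moreover have "real (m^2) * eps^2 = 1"
    using \<open>m > 0\<close> by (simp add: eps_m power_divide)
  moreover have "eps^2 \<le> 1"
    using eps_m \<open>m > 0\<close> \<open>eps > 0\<close> by (intro power_le_one) auto
  ultimately show thesis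
    using that by blast
qed

lemma sum_of_bool_less:
  assumes "i \<le> N"
  shows "(\<Sum>j<N. of_bool (j < i) :: real) = real i"
proof -
  have "{..<N} \<inter> {j. j < i} = {..<i}"
    using assms by auto
  then show ?thesis
    by (simp add: sum.If_cases)
qed

lemma (in prob_space) expectation_lattice_valued:
  fixes f :: "'a \<Rightarrow> real"
  assumes f_meas: "f \<in> borel_measurable M" and "d > 0"
    and f_lattice: "AE \<omega> in M. f \<omega> \<in> (\<lambda>i. real i * d) ` {..N}"
  shows "expectation f = d * (\<Sum>j<N. 1 - prob {\<omega> \<in> space M. f \<omega> \<le> real j * d})"
proof -
  define A where "A j = {\<omega> \<in> space M. f \<omega> \<le> real j * d}" for j
  have A_events: "A j \<in> events" for j
    unfolding A_def using f_meas by measurable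
  have A_integrable: "integrable M (indicator (A j) :: 'a \<Rightarrow> real)" for j
    using A_events by (simp add: integrable_real_indicator emeasure_eq_measure)
  have "AE \<omega> in M. f \<omega> = (\<Sum>j<N. d * (1 - indicator (A j) \<omega>))"
    using f_lattice AE_space
  proof eventually_elim
    case (elim \<omega>)
    then obtain i where i: "i \<le> N" "f \<omega> = real i * d"
      by auto
    have "1 - indicator (A j) \<omega> = (of_bool (j < i) :: real)" for j
      using elim i \<open>d > 0\<close> by (auto simp: A_def indicator_def)
    then show ?case
      using sum_of_bool_less[OF i(1)] i(2) by (simp flip: sum_distrib_left)
  qed
  then have "expectation f = expectation (\<lambda>\<omega>. \<Sum>j<N. d * (1 - indicator (A j) \<omega>))"
    using f_meas A_events by (intro integral_cong_AE) auto
  also have "\<dots> = (\<Sum>j<N. expectation (\<lambda>\<omega>. d * (1 - indicator (A j) \<omega>)))"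
    using A_integrable by (intro Bochner_Integration.integral_sum) auto
  also have "\<dots> = (\<Sum>j<N. d * (1 - prob (A j)))"
    using A_integrable A_events by (simp add: prob_space)
  finally show ?thesis
    by (simp add: A_def sum_distrib_left)
qed

lemma maxS_measurable:
  assumes "finite S" "\<And>i. i \<in> S \<Longrightarrow> X i \<in> borel_measurable M"
  shows "maxS X S \<in> borel_measurable M"
proof (cases "S = {}")
  case False
  then have "maxS X S = (\<lambda>\<omega>. Max ((\<lambda>i. X i \<omega>) ` S))"
    by (simp add: maxS_def fun_eq_iff)
  then show ?thesis
    using assms by (simp add: borel_measurable_Max)
qed (simp add: maxS_def[abs_def])

lemma maxS_mem:
  assumes "finite S" "0 \<in> G" "\<forall>i\<in>S. X i \<omega> \<in> G"
  shows "maxS X S \<omega> \<in> G"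
proof (cases "S = {}")
  case False
  then have "Max ((\<lambda>i. X i \<omega>) ` S) \<in> (\<lambda>i. X i \<omega>) ` S"
    using \<open>finite S\<close> by (intro Max_in) auto
  then show ?thesis
    using False assms(3) by (auto simp: maxS_def)
qed (simp add: maxS_def \<open>0 \<in> G\<close>)

lemma (in prob_space) expectation_maxS_lattice:
  assumes "finite S" "d > 0" "\<And>i. i \<in> S \<Longrightarrow> X i \<in> borel_measurable M"
    and "AE \<omega> in M. \<forall>i\<in>S. X i \<omega> \<in> (\<lambda>i. real i * d) ` {..N}"
  shows "expectation (maxS X S) = d * (\<Sum>j<N. 1 - cdfS M X S (real j * d))"
proof -
  have "AE \<omega> in M. maxS X S \<omega> \<in> (\<lambda>i. real i * d) ` {..N}"
    using assms(4) by eventually_elim (rule maxS_mem[OF \<open>finite S\<close>], force+)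
  then show ?thesis
    unfolding cdfS_def
    using expectation_lattice_valued maxS_measurable assms(1-3) by blast
qed

lemma (in prob_space) expectation_maxS_ge_of_cdf_le:
  assumes "finite I" "S \<subseteq> I" "T \<subseteq> I" "d > 0"
    and "\<And>i. i \<in> I \<Longrightarrow> X i \<in> borel_measurable M"
    and lattice: "AE \<omega> in M. \<forall>i\<in>I. X i \<omega> \<in> (\<lambda>i. real i * d) ` {..N}"
    and cdf_le: "\<And>j. j < N \<Longrightarrow> cdfS M X T (real j * d) \<le> cdfS M X S (real j * d) + c"
  shows "expectation (maxS X S) - d * (real N * c) \<le> expectation (maxS X T)"
proof -
  have expectation_eq: "expectation (maxS X U) = d * (\<Sum>j<N. 1 - cdfS M X U (real j * d))"
    if "U \<subseteq> I" for U
  proof (rule expectation_maxS_lattice)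
    show "AE \<omega> in M. \<forall>i\<in>U. X i \<omega> \<in> (\<lambda>i. real i * d) ` {..N}"
      using lattice by eventually_elim (use that in blast)
  qed (use that assms(1,4,5) finite_subset in auto)
  have "(\<Sum>j<N. 1 - cdfS M X S (real j * d) - c) \<le> (\<Sum>j<N. 1 - cdfS M X T (real j * d))"
    using cdf_le by (intro sum_mono) (smt (verit) lessThan_iff)
  then have "(\<Sum>j<N. 1 - cdfS M X S (real j * d)) - real N * c \<le> (\<Sum>j<N. 1 - cdfS M X T (real j * d))"
    by (simp add: sum_subtractf)
  then show ?thesis
    using mult_left_mono[of _ _ d] \<open>d > 0\<close>
    by (fastforce simp: expectation_eq assms(2,3) right_diff_distrib)
qed

lemma heavy_outside_Vcrit:
  assumes "finite (grid eps E)" "v \<in> grid eps E" "0 \<le> v" "v \<notin> Vcrit eps E F"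
  shows "F v \<ge> 1 - eps^2"
proof (rule ccontr)
  define H where "H = {v \<in> grid eps E. F v < 1 - eps^2}"
  assume "\<not> F v \<ge> 1 - eps^2"
  then have "v \<in> H"
    using assms(2) by (simp add: H_def)
  moreover have "finite H"
    using assms(1) by (simp add: H_def)
  ultimately have "H \<noteq> {} \<and> v \<le> Max H"
    by auto
  then show False
    using assms(2-4) by (simp add: Vcrit_def Let_def flip: H_def)
qed

lemma approx_cdf_loss:
  fixes eps p Fs Ft :: real
  assumes "eps^2 \<le> 1" "0 \<le> Fs" "Fs \<le> 1"
    and "Ft \<le> (1 + eps^2) * p + eps^2" "p < Fs + 2 * eps^2"
  shows "Ft \<le> Fs + 6 * eps^2"
proof -
  have "(1 + eps^2) * p \<le> (1 + eps^2) * (Fs + 2 * eps^2)"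
    using assms(5) by (intro mult_left_mono) auto
  moreover have "eps^2 * Fs \<le> eps^2" "eps^2 * eps^2 \<le> eps^2"
    using assms(1-3) by (simp_all only: mult_left_le zero_le_power2)
  ultimately show ?thesis
    using assms(4) by (simp add: algebra_simps)
qed

lemma cdf_le_of_approx_on_Vcrit:
  fixes F G p :: "real \<Rightarrow> real"
  assumes "finite (grid eps E)" "v \<in> grid eps E" "0 \<le> v" "eps^2 \<le> 1"
    and "0 \<le> F v" "F v \<le> 1" "G v \<le> 1"
    and "\<forall>v \<in> Vcrit eps E F. p v < F v + 2 * eps^2"
    and "\<forall>v \<in> Vcrit eps E F. G v \<le> (1 + eps^2) * p v + eps^2"
  shows "G v \<le> F v + 6 * eps^2"
proof (cases "v \<in> Vcrit eps E F")
  case True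
  then show ?thesis
    using assms(4-9) by (intro approx_cdf_loss[of eps _ _ "p v"]) auto
next
  case False
  then show ?thesis
    using heavy_outside_Vcrit[OF assms(1-3) False] assms(7) zero_le_power2[of eps] by linarith
qed

theorem lemma4p1:
  fixes M :: "'a measure" and X :: "nat \<Rightarrow> 'a \<Rightarrow> real"
    and n k :: nat and eps E :: real and Sstar St :: "nat set" and pt :: "real \<Rightarrow> real"
  assumes P: "prob_space M"
    and eps_pos: "eps > 0" and eps_int: "\<exists>m::nat. 1 / eps = real m"
    and E_pos: "E > 0"
    and indep: "prob_space.indep_vars M (\<lambda>_. borel) X {1..n}"
    and supp: "\<forall>i\<in>{1..n}. AE \<omega> in M. X i \<omega> \<in> grid eps E"
    and Sstar_sub: "Sstar \<subseteq> {1..n}" and Sstar_card: "card Sstar \<le> k"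
    and Sstar_opt: "\<forall>S. S \<subseteq> {1..n} \<and> card S \<le> k \<longrightarrow>
                      prob_space.expectation M (maxS X S) \<le> prob_space.expectation M (maxS X Sstar)"
    and E_lo: "(1 - 1 / exp 1) * prob_space.expectation M (maxS X Sstar) \<le> E"
    and E_hi: "E \<le> prob_space.expectation M (maxS X Sstar)"
    and pt_bounds: "\<forall>v \<in> Vcrit eps E (cdfS M X Sstar).
                      cdfS M X Sstar v \<le> pt v \<and> pt v < cdfS M X Sstar v + 2 * eps^2"
    and St_sub: "St \<subseteq> {1..n}"
    and St_cdf: "\<forall>v \<in> Vcrit eps E (cdfS M X Sstar).
                      cdfS M X St v \<le> (1 + eps^2) * pt v + eps^2"
  shows "prob_space.expectation M (maxS X St) \<ge> (1 - 23 * eps) * prob_space.expectation M (maxS X Sstar)"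
proof -
  interpret prob_space M by (rule P)
  obtain N where grid: "grid eps E = (\<lambda>j. real j * (eps * E)) ` {..N}"
    and N_eps: "real N * eps^2 = 1" and "eps^2 \<le> 1"
    using grid_eq_lattice[OF eps_pos eps_int E_pos] by blast
  have cdf_loss: "cdfS M X St v \<le> cdfS M X Sstar v + 6 * eps^2" if "v \<in> grid eps E" for v
    by (rule cdf_le_of_approx_on_Vcrit[where F = "cdfS M X Sstar" and G = "cdfS M X St" and p = pt])
      (use that \<open>eps^2 \<le> 1\<close> eps_pos E_pos pt_bounds St_cdf in \<open>auto simp: grid cdfS_def\<close>)
  have "expectation (maxS X Sstar) - eps * E * (real N * (6 * eps^2)) \<le> expectation (maxS X St)"
  proof (rule expectation_maxS_ge_of_cdf_le)
    show "AE \<omega> in M. \<forall>i\<in>{1..n}. X i \<omega> \<in> (\<lambda>i. real i * (eps * E)) ` {..N}"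
      using supp by (subst AE_finite_all) (auto simp flip: grid)
    show "cdfS M X St (real j * (eps * E)) \<le> cdfS M X Sstar (real j * (eps * E)) + 6 * eps^2"
      if "j < N" for j
      using that by (intro cdf_loss) (auto simp: grid)
  qed (use Sstar_sub St_sub indep eps_pos E_pos in \<open>auto simp: indep_vars_def2\<close>)
  moreover have "real N * (6 * eps^2) = 6"
    using N_eps by simp
  moreover have "eps * E \<le> eps * expectation (maxS X Sstar)"
    using E_hi eps_pos by (intro mult_left_mono) auto
  ultimately have "expectation (maxS X Sstar) - 6 * (eps * expectation (maxS X Sstar)) \<le> expectation (maxS X St)"
    by (simp add: mult.assoc)
  moreover have "0 \<le> eps * expectation (maxS X Sstar)"
    using E_hi eps_pos E_pos by simp
  ultimately show ?thesis
    by (simp add: algebra_simps)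
qed

end
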